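(* Let $\delta>0$, $n\ge1$, let $w\in\mathbb{R}^n$ satisfy $w_1\ge w_2\ge\dots\ge w_n\ge0$, and let $\tilde w$ be its sparsification with respect to $P_{n,\delta}$. Then for every $v\in\mathbb{R}^n_{\ge0}$, $\mathrm{cost}(\tilde w;v)\le\mathrm{cost}(w;v)\le(1+\delta)\,\mathrm{cost}(\tilde w;v)$.
   Context: $P_{n,\delta}=\{\min\{\lceil(1+\delta)^s\rceil,n\}:s\in\mathbb{Z}_{\ge0}\}$; for $\ell\in P_{n,\delta}$ with $\ell<n$, $\mathrm{next}(\ell)$ is the smallest element of $P_{n,\delta}$ larger than $\ell$. The sparsification $\tilde w\in\mathbb{R}^n$ is defined by $\tilde w_i=w_i$ if $i\in P_{n,\delta}$, and $\tilde w_i=w_{\mathrm{next}(\ell)}$ if $\ell\in P_{n,\delta}$ and $\ell<i<\mathrm{next}(\ell)$. For a non-increasing $u$, $\mathrm{cost}(u;v)=\sum_{i=1}^n u_iv^\downarrow_i$, with $v^\downarrow$ the non-increasing rearrangement of $v$. *)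

theory Defs
  imports Complex_Main
begin

text \<open>Vectors in R^n are functions nat => real, using coordinates 1..n.\<close>

definition Pset :: "nat \<Rightarrow> real \<Rightarrow> nat set" where
  "Pset n \<delta> = {min (nat \<lceil>(1 + \<delta>) ^ s\<rceil>) n | s :: nat. True}"

definition nextP :: "nat \<Rightarrow> real \<Rightarrow> nat \<Rightarrow> nat" where
  "nextP n \<delta> l = (LEAST m. m \<in> Pset n \<delta> \<and> l < m)"

definition sparsify :: "nat \<Rightarrow> real \<Rightarrow> (nat \<Rightarrow> real) \<Rightarrow> (nat \<Rightarrow> real)" where
  "sparsify n \<delta> w i =
     (if i \<in> Pset n \<delta> then w i
      else (THE x. \<exists>l \<in> Pset n \<delta>. l < n \<and> l < i \<and> i < nextP n \<delta> l \<and> x = w (nextP n \<delta> l)))"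

definition vdown :: "nat \<Rightarrow> (nat \<Rightarrow> real) \<Rightarrow> nat \<Rightarrow> real" where
  "vdown n v i = rev (sort (map v [1..<n+1])) ! (i - 1)"

definition cost :: "nat \<Rightarrow> (nat \<Rightarrow> real) \<Rightarrow> (nat \<Rightarrow> real) \<Rightarrow> real" where
  "cost n u v = (\<Sum>i = 1..n. u i * vdown n v i)"

end

theory Submission
  imports Defs
begin

text \<open>
  Let p(i) be the least element of P that is \<ge> i, so the sparsified vector is w(p(i)). As p(i) \<ge> i
  and w is non-increasing, the sparsified vector lies below w, which gives the lower bound.
  For the upper bound, write a for the sorted v and A(t) for its prefix sums. By Abel summation
  against the non-increasing weights w it suffices to compare prefix sums: the indices j with
  p(j) \<le> t are exactly 1..q(t), where q(t) is the largest element of P that is \<le> t. The prefix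
  means A(t)/t of a non-increasing sequence decrease, and t \<le> (1 + \<delta>) q(t) because P contains
  the ceiling of every power of 1 + \<delta> up to n, so A(t) \<le> (1 + \<delta>) A(q(t)).
\<close>

lemma antimono_on_if_Suc_le:
  fixes u :: "nat \<Rightarrow> 'a::order"
  assumes "\<forall>i\<in>{1..<m}. u (i + 1) \<le> u i"
  shows "antimono_on {1..m} u"
proof (rule monotone_onI)
  define f where "f k = u (max 1 (min k m))" for k
  have "f (Suc k) \<le> f k" for k
    using assms by (cases "k = 0"; cases "k < m") (auto simp: f_def max_def min_def)
  then have f_antimono: "f j \<le> f i" if "i \<le> j" for i j
    using lift_Suc_antimono_le that by metis
  fix i j assume "i \<in> {1..m}" "j \<in> {1..m}" "i \<le> j"
  then show "u j \<le> u i"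
    using f_antimono[of i j] by (simp add: f_def)
qed

lemma power_bracket:
  fixes x t :: real
  assumes "1 \<le> t" "1 < x"
  shows "\<exists>s. x ^ s \<le> t \<and> t < x ^ Suc s"
proof -
  obtain N where "t < x ^ N" using real_arch_pow[OF assms(2)] by blast
  then show ?thesis
  proof (induction N)
    case 0 then show ?case using assms by simp
  next
    case (Suc N)
    then show ?case by (cases "t < x ^ N") (auto simp: not_less)
  qed
qed

lemma weighted_sum_le_if_prefix_sums_le:
  fixes u b c :: "nat \<Rightarrow> real"
  assumes "antimono_on {1..m} u" "\<forall>i\<in>{1..m}. 0 \<le> u i"
    and "\<forall>t\<in>{1..m}. (\<Sum>i=1..t. b i) \<le> (\<Sum>i=1..t. c i)"
  shows "(\<Sum>i=1..m. u i * b i) \<le> (\<Sum>i=1..m. u i * c i)"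
  using assms
proof (induction m arbitrary: u)
  case 0 then show ?case by simp
next
  case (Suc m)
  \<comment> \<open>Abel summation: peel off the constant u (Suc m) from all weights.\<close>
  define u' where "u' i = u i - u (Suc m)" for i
  have "antimono_on {1..m} u'"
    using Suc.prems(1) by (auto simp: u'_def monotone_on_def)
  moreover have "\<forall>i\<in>{1..m}. 0 \<le> u' i"
    using Suc.prems(1) by (auto simp: u'_def monotone_on_def)
  ultimately have IH: "(\<Sum>i=1..m. u' i * b i) \<le> (\<Sum>i=1..m. u' i * c i)"
    using Suc.IH Suc.prems(3) by auto
  have split: "(\<Sum>i=1..Suc m. u i * f i) =
      (\<Sum>i=1..m. u' i * f i) + u (Suc m) * (\<Sum>i=1..Suc m. f i)" for f
    by (simp add: u'_def algebra_simps sum_distrib_left sum_subtractf)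
  have "(\<Sum>i=1..Suc m. b i) \<le> (\<Sum>i=1..Suc m. c i)"
    by (rule bspec[OF Suc.prems(3)]) simp
  then have "u (Suc m) * (\<Sum>i=1..Suc m. b i) \<le> u (Suc m) * (\<Sum>i=1..Suc m. c i)"
    using Suc.prems(2) by (intro mult_left_mono) auto
  then show ?case using IH split[of b] split[of c] by linarith
qed

lemma prefix_mean_antimono:
  fixes a :: "nat \<Rightarrow> real"
  assumes "antimono_on {1..n} a" "q \<le> t" "t \<le> n"
  shows "real q * (\<Sum>i=1..t. a i) \<le> real t * (\<Sum>i=1..q. a i)"
  using assms(2,3)
proof (induction t)
  case 0 then show ?case by simp
next
  case (Suc t)
  show ?case
  proof (cases "q = Suc t")
    case False
    then have "q \<le> t" using Suc.prems by simp
    then have IH: "real q * (\<Sum>i=1..t. a i) \<le> real t * (\<Sum>i=1..q. a i)"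
      using Suc by simp
    have "(\<Sum>i=1..q. a (Suc t)) \<le> (\<Sum>i=1..q. a i)"
      using assms(1) \<open>q \<le> t\<close> Suc.prems by (intro sum_mono) (auto simp: monotone_on_def)
    then show ?thesis using IH by (simp add: algebra_simps)
  qed simp
qed

lemma prefix_sum_le_scaled:
  fixes a :: "nat \<Rightarrow> real"
  assumes "antimono_on {1..n} a" "\<forall>i\<in>{1..n}. 0 \<le> a i"
    and "1 \<le> q" "q \<le> t" "t \<le> n" "real t \<le> c * real q"
  shows "(\<Sum>i=1..t. a i) \<le> c * (\<Sum>i=1..q. a i)"
proof -
  have "0 \<le> (\<Sum>i=1..q. a i)" using assms(2-5) by (intro sum_nonneg) auto
  then have "real q * (\<Sum>i=1..t. a i) \<le> (c * real q) * (\<Sum>i=1..q. a i)"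
    using prefix_mean_antimono[OF assms(1,4,5)] assms(6) by (meson mult_right_mono order_trans)
  then show ?thesis using assms(3) by (simp add: algebra_simps)
qed

lemma weighted_sum_le_reindexed:
  fixes w a b :: "nat \<Rightarrow> real" and p :: "nat \<Rightarrow> nat"
  assumes "antimono_on {1..n} w" "\<forall>i\<in>{1..n}. 0 \<le> w i" "p ` {1..n} \<subseteq> {1..n}"
    and "\<forall>t\<in>{1..n}. (\<Sum>i=1..t. a i) \<le> (\<Sum>j | j \<in> {1..n} \<and> p j \<le> t. b j)"
  shows "(\<Sum>i=1..n. w i * a i) \<le> (\<Sum>j=1..n. w (p j) * b j)"
proof -
  define c where "c i = (\<Sum>j | j \<in> {1..n} \<and> p j = i. b j)" for i
  have "(\<Sum>i=1..t. c i) = (\<Sum>j | j \<in> {1..n} \<and> p j \<le> t. b j)" for t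
  proof -
    have "(\<Sum>i=1..t. c i) = (\<Sum>i=1..t. \<Sum>j | j \<in> {j \<in> {1..n}. p j \<le> t} \<and> p j = i. b j)"
      unfolding c_def by (intro sum.cong) auto
    also have "\<dots> = (\<Sum>j | j \<in> {1..n} \<and> p j \<le> t. b j)"
      using assms(3) by (intro sum.group) (auto simp: image_subset_iff)
    finally show ?thesis .
  qed
  then have "(\<Sum>i=1..n. w i * a i) \<le> (\<Sum>i=1..n. w i * c i)"
    using assms(4) by (intro weighted_sum_le_if_prefix_sums_le[OF assms(1,2)]) auto
  also have "\<dots> = (\<Sum>i=1..n. \<Sum>j | j \<in> {1..n} \<and> p j = i. w (p j) * b j)"
    unfolding c_def sum_distrib_left by (intro sum.cong) auto
  also have "\<dots> = (\<Sum>j=1..n. w (p j) * b j)"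
    using assms(3) by (intro sum.group) (auto simp: image_subset_iff)
  finally show ?thesis .
qed

definition round_up :: "nat set \<Rightarrow> nat \<Rightarrow> nat" where
  "round_up P i = (LEAST m. m \<in> P \<and> i \<le> m)"

definition round_down :: "nat set \<Rightarrow> nat \<Rightarrow> nat" where
  "round_down P t = Max {m \<in> P. m \<le> t}"

lemma
  assumes "n \<in> P" "i \<le> n"
  shows round_up_mem: "round_up P i \<in> P" and le_round_up: "i \<le> round_up P i"
  using LeastI[of "\<lambda>m. m \<in> P \<and> i \<le> m" n] assms by (auto simp: round_up_def)

lemma round_up_le: "m \<in> P \<Longrightarrow> i \<le> m \<Longrightarrow> round_up P i \<le> m"
  unfolding round_up_def by (rule Least_le) simp

lemma round_up_eq_self: "i \<in> P \<Longrightarrow> round_up P i = i"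
  unfolding round_up_def by (rule Least_equality) auto

lemma
  assumes "finite P" "1 \<in> P" "1 \<le> t"
  shows round_down_mem: "round_down P t \<in> P" and round_down_le: "round_down P t \<le> t"
proof -
  have "round_down P t \<in> {m \<in> P. m \<le> t}"
    unfolding round_down_def using assms by (intro Max_in) auto
  then show "round_down P t \<in> P" "round_down P t \<le> t" by auto
qed

lemma le_round_down: "finite P \<Longrightarrow> m \<in> P \<Longrightarrow> m \<le> t \<Longrightarrow> m \<le> round_down P t"
  unfolding round_down_def by (rule Max_ge) auto

lemma round_up_le_iff:
  assumes "finite P" "1 \<in> P" "n \<in> P" "j \<le> n" "1 \<le> t"
  shows "round_up P j \<le> t \<longleftrightarrow> j \<le> round_down P t"
  by (meson assms le_round_down le_round_up order_trans round_down_mem round_down_le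
      round_up_le round_up_mem)

lemma finite_Pset: "finite (Pset n \<delta>)"
  by (rule finite_subset[of _ "{..n}"]) (auto simp: Pset_def)

lemma Pset_subset:
  assumes "1 \<le> n" "0 \<le> \<delta>"
  shows "Pset n \<delta> \<subseteq> {1..n}"
proof
  fix x assume "x \<in> Pset n \<delta>"
  then obtain s :: nat where x: "x = min (nat \<lceil>(1 + \<delta>) ^ s\<rceil>) n"
    by (auto simp: Pset_def)
  have "1 \<le> (1 + \<delta>) ^ s" using assms(2) by (simp add: one_le_power)
  then have "1 \<le> nat \<lceil>(1 + \<delta>) ^ s\<rceil>" by linarith
  then show "x \<in> {1..n}" using x assms(1) by auto
qed

lemma one_mem_Pset: "1 \<le> n \<Longrightarrow> 1 \<in> Pset n \<delta>"
  unfolding Pset_def by (rule CollectI, rule exI[of _ 0]) simp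

lemma mem_Pset_self:
  assumes "0 < \<delta>"
  shows "n \<in> Pset n \<delta>"
proof -
  obtain s where "real n < (1 + \<delta>) ^ s"
    using real_arch_pow[of "1 + \<delta>" "real n"] assms by auto
  then have "n = min (nat \<lceil>(1 + \<delta>) ^ s\<rceil>) n" by linarith
  then show ?thesis unfolding Pset_def by blast
qed

lemma
  assumes "0 < \<delta>" "1 \<le> n" "i \<in> {1..n}"
  shows round_up_Pset_mem: "round_up (Pset n \<delta>) i \<in> {1..n}"
    and le_round_up_Pset: "i \<le> round_up (Pset n \<delta>) i"
  using assms subsetD[OF Pset_subset round_up_mem[OF mem_Pset_self]] le_round_up[OF mem_Pset_self]
  by auto

lemma
  assumes "1 \<le> n" "0 \<le> \<delta>" "t \<in> {1..n}"
  shows round_down_Pset_mem: "round_down (Pset n \<delta>) t \<in> {1..n}"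
    and round_down_Pset_le: "round_down (Pset n \<delta>) t \<le> t"
  using assms subsetD[OF Pset_subset round_down_mem[OF finite_Pset one_mem_Pset]]
    round_down_le[OF finite_Pset one_mem_Pset]
  by auto

lemma round_down_Pset_ge:
  assumes "0 < \<delta>" "t \<in> {1..n}"
  shows "real t \<le> (1 + \<delta>) * real (round_down (Pset n \<delta>) t)"
proof -
  obtain s where s: "(1 + \<delta>) ^ s \<le> real t" "real t < (1 + \<delta>) ^ Suc s"
    using power_bracket[of "real t" "1 + \<delta>"] assms by auto
  define m where "m = nat \<lceil>(1 + \<delta>) ^ s\<rceil>"
  have "m \<le> t" using s(1) unfolding m_def by (simp add: nat_le_iff ceiling_le_iff)
  then have "m \<in> Pset n \<delta>"
    using assms(2) unfolding Pset_def m_def by (auto intro!: exI[of _ s])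
  then have "m \<le> round_down (Pset n \<delta>) t"
    using \<open>m \<le> t\<close> finite_Pset by (rule le_round_down[rotated])
  have "(1 + \<delta>) ^ s \<le> real m" unfolding m_def by linarith
  then have "(1 + \<delta>) * (1 + \<delta>) ^ s \<le> (1 + \<delta>) * real m"
    using assms(1) by (intro mult_left_mono) auto
  then have "real t \<le> (1 + \<delta>) * real m" using s(2) by simp
  also have "\<dots> \<le> (1 + \<delta>) * real (round_down (Pset n \<delta>) t)"
    using \<open>m \<le> round_down _ t\<close> assms(1) by simp
  finally show ?thesis .
qed

lemma prefix_sum_le_round_up_Pset:
  fixes a :: "nat \<Rightarrow> real"
  assumes "0 < \<delta>" "1 \<le> n" "antimono_on {1..n} a" "\<forall>i\<in>{1..n}. 0 \<le> a i" "t \<in> {1..n}"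
  shows "(\<Sum>i=1..t. a i) \<le> (\<Sum>j | j \<in> {1..n} \<and> round_up (Pset n \<delta>) j \<le> t. (1 + \<delta>) * a j)"
proof -
  let ?P = "Pset n \<delta>"
  have q: "round_down ?P t \<in> {1..n}" "round_down ?P t \<le> t"
    using assms(1,2,5) round_down_Pset_mem round_down_Pset_le by auto
  have "{j. j \<in> {1..n} \<and> round_up ?P j \<le> t} = {1..round_down ?P t}"
    using q assms(5) round_up_le_iff[OF finite_Pset one_mem_Pset mem_Pset_self] assms(1,2) by auto
  moreover have "(\<Sum>i=1..t. a i) \<le> (1 + \<delta>) * (\<Sum>i=1..round_down ?P t. a i)"
    using q assms(4,5)
    by (intro prefix_sum_le_scaled[OF assms(3)] round_down_Pset_ge[OF assms(1)]) auto
  ultimately show ?thesis by (simp add: sum_distrib_left)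
qed

lemma nextP_eq_round_up: "nextP n \<delta> l = round_up (Pset n \<delta>) (Suc l)"
  by (simp add: nextP_def round_up_def Suc_le_eq)

lemma sparsify_eq_round_up:
  assumes "0 < \<delta>" "1 \<le> n" "i \<in> {1..n}"
  shows "sparsify n \<delta> w i = w (round_up (Pset n \<delta>) i)"
proof (cases "i \<in> Pset n \<delta>")
  case True
  then show ?thesis by (simp add: sparsify_def round_up_eq_self)
next
  case False
  let ?P = "Pset n \<delta>"
  have P: "finite ?P" "1 \<in> ?P" "n \<in> ?P"
    using assms finite_Pset one_mem_Pset mem_Pset_self by auto
  have i: "i \<le> n" using assms(3) by simp
  \<comment> \<open>Uniqueness for the THE in sparsify: any gap l < i < next l has next l = round_up i.\<close>
  have gap_eq: "round_up ?P (Suc l) = round_up ?P i"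
    if "l < i" "i < round_up ?P (Suc l)" for l
  proof (rule antisym)
    show "round_up ?P (Suc l) \<le> round_up ?P i"
      using that le_round_up[OF P(3) i] by (intro round_up_le round_up_mem[OF P(3) i]) auto
    show "round_up ?P i \<le> round_up ?P (Suc l)"
      using that i by (intro round_up_le round_up_mem[OF P(3)]) auto
  qed
  define l where "l = round_down ?P i"
  have "l \<in> ?P" "l \<le> i"
    using assms(3) unfolding l_def
    by (simp_all add: round_down_mem[OF P(1,2)] round_down_le[OF P(1,2)])
  then have l: "l \<in> ?P" "l < i" "l < n"
    using False i by (auto simp: le_less)
  have i_gap: "i < round_up ?P (Suc l)"
  proof (rule ccontr)
    assume "\<not> i < round_up ?P (Suc l)"
    then have "round_up ?P (Suc l) \<le> round_down ?P i"
      using l(3) by (intro le_round_down[OF P(1)] round_up_mem[OF P(3)]) auto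
    then show False using le_round_up[OF P(3), of "Suc l"] l(3) l_def by simp
  qed
  have "(THE x. \<exists>l \<in> ?P. l < n \<and> l < i \<and> i < nextP n \<delta> l \<and> x = w (nextP n \<delta> l))
      = w (round_up ?P i)"
    unfolding nextP_eq_round_up
  proof (rule the_equality)
    show "\<exists>l' \<in> ?P. l' < n \<and> l' < i \<and> i < round_up ?P (Suc l')
        \<and> w (round_up ?P i) = w (round_up ?P (Suc l'))"
      using l i_gap gap_eq by (intro bexI[of _ l]) auto
    show "x = w (round_up ?P i)"
      if "\<exists>l' \<in> ?P. l' < n \<and> l' < i \<and> i < round_up ?P (Suc l') \<and> x = w (round_up ?P (Suc l'))"
      for x
      using that gap_eq by force
  qed
  then show ?thesis using False by (simp add: sparsify_def)
qed

lemma vdown_nonneg: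
  assumes "\<forall>i\<in>{1..n}. 0 \<le> v i" "i \<in> {1..n}"
  shows "0 \<le> vdown n v i"
proof -
  have "vdown n v i \<in> set (rev (sort (map v [1..<n+1])))"
    unfolding vdown_def using assms(2) by (intro nth_mem) auto
  then show ?thesis using assms(1) by auto
qed

lemma antimono_on_vdown: "antimono_on {1..n} (vdown n v)"
proof (rule monotone_onI)
  fix i j assume "i \<in> {1..n}" "j \<in> {1..n}" "i \<le> j"
  moreover have "sorted (sort (map v [1..<n+1]))" by simp
  ultimately show "vdown n v j \<le> vdown n v i"
    unfolding vdown_def by (simp add: rev_nth sorted_nth_mono)
qed

lemma cost_mono:
  assumes "\<forall>i\<in>{1..n}. u i \<le> u' i" "\<forall>i\<in>{1..n}. 0 \<le> v i"
  shows "cost n u v \<le> cost n u' v"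
  unfolding cost_def using assms vdown_nonneg by (intro sum_mono mult_right_mono) auto

lemma cost_sparsify_le:
  assumes "0 < \<delta>" "1 \<le> n" "antimono_on {1..n} w" "\<forall>i\<in>{1..n}. 0 \<le> v i"
  shows "cost n (sparsify n \<delta> w) v \<le> cost n w v"
proof (rule cost_mono[OF _ assms(4)])
  show "\<forall>i\<in>{1..n}. sparsify n \<delta> w i \<le> w i"
    using assms(1,2) round_up_Pset_mem le_round_up_Pset
    by (auto simp: sparsify_eq_round_up intro: monotone_onD[OF assms(3)])
qed

lemma cost_le_cost_sparsify:
  assumes "0 < \<delta>" "1 \<le> n" "antimono_on {1..n} w" "\<forall>i\<in>{1..n}. 0 \<le> w i"
    and "\<forall>i\<in>{1..n}. 0 \<le> v i"
  shows "cost n w v \<le> (1 + \<delta>) * cost n (sparsify n \<delta> w) v"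
proof -
  let ?p = "round_up (Pset n \<delta>)" and ?a = "vdown n v"
  have "cost n w v \<le> (\<Sum>j=1..n. w (?p j) * ((1 + \<delta>) * ?a j))"
    unfolding cost_def
  proof (rule weighted_sum_le_reindexed[OF assms(3,4)])
    show "?p ` {1..n} \<subseteq> {1..n}" using assms(1,2) round_up_Pset_mem by auto
    show "\<forall>t\<in>{1..n}. (\<Sum>i=1..t. ?a i) \<le> (\<Sum>j | j \<in> {1..n} \<and> ?p j \<le> t. (1 + \<delta>) * ?a j)"
      using assms(1,2) vdown_nonneg[OF assms(5)]
      by (intro ballI prefix_sum_le_round_up_Pset antimono_on_vdown) auto
  qed
  also have "\<dots> = (1 + \<delta>) * cost n (sparsify n \<delta> w) v"
    using assms(1,2)
    by (simp add: cost_def sum_distrib_left sparsify_eq_round_up mult.left_commute)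
  finally show ?thesis .
qed

theorem mainTheorem12:
  fixes \<delta> :: real and n :: nat and w v :: "nat \<Rightarrow> real"
  assumes "\<delta> > 0" and "n \<ge> 1"
    and "\<forall>i \<in> {1..<n}. w (i + 1) \<le> w i" and "w n \<ge> 0"
    and "\<forall>i \<in> {1..n}. v i \<ge> 0"
  shows "cost n (sparsify n \<delta> w) v \<le> cost n w v \<and>
         cost n w v \<le> (1 + \<delta>) * cost n (sparsify n \<delta> w) v"
proof -
  have w_antimono: "antimono_on {1..n} w"
    using antimono_on_if_Suc_le[OF assms(3)] .
  have w_nonneg: "\<forall>i\<in>{1..n}. 0 \<le> w i"
  proof
    fix i assume "i \<in> {1..n}"
    then have "w n \<le> w i" using assms(2) by (intro monotone_onD[OF w_antimono]) auto
    then show "0 \<le> w i" using assms(4) by simp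
  qed
  show ?thesis
    using cost_sparsify_le[OF assms(1,2) w_antimono assms(5)]
      cost_le_cost_sparsify[OF assms(1,2) w_antimono w_nonneg assms(5)] by simp
qed

end
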